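(* Let $n\ge 1$ and let $g(q)=q^{n}+q^{n-1}a_{n-1}+\dots+qa_1+a_0$ with $a_0,\dots,a_{n-1}\in\mathbb{H}$. Let $\alpha_1,\alpha_2,\dots,\alpha_{n-1}$ be arbitrary positive real numbers and set $\alpha_0=0$, $\alpha_n=1$. Then every zero $q\in\mathbb{H}$ of $g$ satisfies $$|q|\le \max\Big\{\frac{\alpha_i}{\alpha_{i+1}}+\frac{|a_i|}{\alpha_{i+1}}\ :\ i=0,1,\dots,n-1\Big\}.$$
   Context: $\mathbb{H}$ denotes the real quaternions $a_0+a_1i+a_2j+a_3k$ with $i^2=j^2=k^2=ijk=-1$; for $q=\alpha+\beta i+\gamma j+\delta k$, $|q|=\sqrt{\alpha^2+\beta^2+\gamma^2+\delta^2}$. The polynomial $g$ has its coefficients written to the right of the powers of the variable, and it is evaluated at $q\in\mathbb{H}$ by direct substitution, $g(q)=q^n+q^{n-1}a_{n-1}+\dots+qa_1+a_0$; a zero of $g$ is a $q\in\mathbb{H}$ with $g(q)=0$. *)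

theory Defs
  imports Complex_Main
begin

text \<open>Real quaternions a0 + a1 i + a2 j + a3 k, with i^2 = j^2 = k^2 = ijk = -1.\<close>

datatype quat = Quat (Re: real) (Im1: real) (Im2: real) (Im3: real)

definition qzero :: quat where "qzero = Quat 0 0 0 0"
definition qone :: quat where "qone = Quat 1 0 0 0"

definition qadd :: "quat \<Rightarrow> quat \<Rightarrow> quat" where
  "qadd p q = Quat (Re p + Re q) (Im1 p + Im1 q) (Im2 p + Im2 q) (Im3 p + Im3 q)"

definition qmul :: "quat \<Rightarrow> quat \<Rightarrow> quat" where
  "qmul p q = Quat
     (Re p * Re q - Im1 p * Im1 q - Im2 p * Im2 q - Im3 p * Im3 q)
     (Re p * Im1 q + Im1 p * Re q + Im2 p * Im3 q - Im3 p * Im2 q)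
     (Re p * Im2 q - Im1 p * Im3 q + Im2 p * Re q + Im3 p * Im1 q)
     (Re p * Im3 q + Im1 p * Im2 q - Im2 p * Im1 q + Im3 p * Re q)"

fun qpow :: "quat \<Rightarrow> nat \<Rightarrow> quat" where
  "qpow q 0 = qone"
| "qpow q (Suc m) = qmul (qpow q m) q"

definition qnorm :: "quat \<Rightarrow> real" where
  "qnorm q = sqrt ((Re q)^2 + (Im1 q)^2 + (Im2 q)^2 + (Im3 q)^2)"

fun qsum :: "(nat \<Rightarrow> quat) \<Rightarrow> nat \<Rightarrow> quat" where
  "qsum f 0 = qzero"
| "qsum f (Suc m) = qadd (qsum f m) (f m)"

definition qpoly_eval :: "nat \<Rightarrow> (nat \<Rightarrow> quat) \<Rightarrow> quat \<Rightarrow> quat" where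
  "qpoly_eval n a q = qadd (qpow q n) (qsum (\<lambda>i. qmul (qpow q i) (a i)) n)"

end

theory Submission
  imports Defs "HOL-Analysis.Product_Vector"
begin

text \<open>If \<open>|q|\<close> exceeded the bound \<open>M\<close>, then \<open>|a\<^sub>i| < |q| \<alpha>\<^sub>i\<^sub>+\<^sub>1 - \<alpha>\<^sub>i\<close> for every \<open>i\<close>, so
  \<open>\<Sum> |q|\<^sup>i |a\<^sub>i|\<close> would be strictly smaller than the telescoping sum
  \<open>\<Sum> (|q|\<^sup>i\<^sup>+\<^sup>1 \<alpha>\<^sub>i\<^sub>+\<^sub>1 - |q|\<^sup>i \<alpha>\<^sub>i) = |q|\<^sup>n\<close>. But \<open>g(q) = 0\<close> gives
  \<open>|q|\<^sup>n = |q\<^sup>n| \<le> \<Sum> |q|\<^sup>i |a\<^sub>i|\<close>, since the quaternion norm is multiplicative and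
  subadditive.\<close>

text \<open>Identifying \<open>\<bbbH>\<close> with the normed space \<open>\<real>\<^sup>4\<close> supplies the triangle inequality.\<close>

definition quat_vec :: "quat \<Rightarrow> (real \<times> real) \<times> (real \<times> real)" where
  "quat_vec p = ((Re p, Im1 p), (Im2 p, Im3 p))"

lemma qnorm_eq_norm_quat_vec: "qnorm p = norm (quat_vec p)"
  by (simp add: qnorm_def quat_vec_def norm_prod_def)

lemma qnorm_nonneg: "0 \<le> qnorm p"
  by (simp add: qnorm_def)

lemma qnorm_qadd_le: "qnorm (qadd p r) \<le> qnorm p + qnorm r"
proof -
  have "quat_vec (qadd p r) = quat_vec p + quat_vec r"
    by (simp add: quat_vec_def qadd_def)
  then show ?thesis
    by (simp add: qnorm_eq_norm_quat_vec norm_triangle_ineq)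
qed

lemma qnorm_qmul: "qnorm (qmul p r) = qnorm p * qnorm r"
proof -
  \<comment> \<open>Euler's four-square identity\<close>
  have "(Re (qmul p r))\<^sup>2 + (Im1 (qmul p r))\<^sup>2 + (Im2 (qmul p r))\<^sup>2 + (Im3 (qmul p r))\<^sup>2
     = ((Re p)\<^sup>2 + (Im1 p)\<^sup>2 + (Im2 p)\<^sup>2 + (Im3 p)\<^sup>2) * ((Re r)\<^sup>2 + (Im1 r)\<^sup>2 + (Im2 r)\<^sup>2 + (Im3 r)\<^sup>2)"
    by (simp add: qmul_def power2_eq_square algebra_simps)
  then show ?thesis
    by (simp add: qnorm_def real_sqrt_mult)
qed

lemma qnorm_qpow: "qnorm (qpow q i) = qnorm q ^ i"
proof (induction i)
  case 0
  then show ?case by (simp add: qone_def qnorm_def)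
next
  case (Suc i)
  then show ?case by (simp only: qpow.simps qnorm_qmul) simp
qed

lemma qnorm_qsum_le: "qnorm (qsum f m) \<le> (\<Sum>i<m. qnorm (f i))"
proof (induction m)
  case 0
  then show ?case by (simp add: qzero_def qnorm_def)
next
  case (Suc m)
  then show ?case using qnorm_qadd_le[of "qsum f m" "f m"] by simp
qed

lemma qnorm_eq_if_qadd_eq_qzero:
  assumes "qadd p r = qzero"
  shows "qnorm p = qnorm r"
  using assms unfolding qnorm_def qadd_def qzero_def
  by (simp add: eq_neg_iff_add_eq_0[symmetric] power2_eq_square)

lemma qnorm_power_le_sum_if_qpoly_root:
  assumes "qpoly_eval n a q = qzero"
  shows "qnorm q ^ n \<le> (\<Sum>i<n. qnorm q ^ i * qnorm (a i))"
proof -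
  let ?S = "qsum (\<lambda>i. qmul (qpow q i) (a i)) n"
  have "qnorm (qpow q n) = qnorm ?S"
    using assms by (intro qnorm_eq_if_qadd_eq_qzero) (simp add: qpoly_eval_def)
  also have "\<dots> \<le> (\<Sum>i<n. qnorm (qmul (qpow q i) (a i)))"
    by (rule qnorm_qsum_le)
  finally show ?thesis
    by (simp add: qnorm_qpow qnorm_qmul)
qed

lemma le_Max_if_power_le_weighted_sum:
  fixes r :: real and b \<alpha> :: "nat \<Rightarrow> real"
  assumes "n \<ge> 1"
    and \<alpha>_pos: "\<And>i. i < n \<Longrightarrow> 0 < \<alpha> (Suc i)"
    and "\<alpha> 0 = 0" and "\<alpha> n = 1"
    and b_nonneg: "\<And>i. i < n \<Longrightarrow> 0 \<le> b i"
    and power_le: "r ^ n \<le> (\<Sum>i<n. r ^ i * b i)"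
  shows "r \<le> Max ((\<lambda>i. \<alpha> i / \<alpha> (Suc i) + b i / \<alpha> (Suc i)) ` {0..<n})"
    (is "r \<le> Max (?f ` _)")
proof (rule ccontr)
  assume "\<not> r \<le> Max (?f ` {0..<n})"
  then have r_gt: "?f i < r" if "i < n" for i
    using that by (meson Max_ge atLeastLessThan_iff finite_atLeastLessThan finite_imageI
        image_eqI le_less_trans not_le zero_le)
  have b_lt: "b i < r * \<alpha> (Suc i) - \<alpha> i" if "i < n" for i
    using r_gt[OF that] \<alpha>_pos[OF that]
    by (simp add: add_divide_distrib[symmetric] divide_less_eq algebra_simps)
  have "0 \<le> ?f 0"
    using assms by (simp add: less_imp_le)
  with r_gt[of 0] \<open>n \<ge> 1\<close> have "0 < r" by simp
  have "(\<Sum>i<n. r ^ i * b i) < (\<Sum>i<n. r ^ i * (r * \<alpha> (Suc i) - \<alpha> i))"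
    using \<open>n \<ge> 1\<close> \<open>0 < r\<close> b_lt
    by (intro sum_strict_mono) (auto intro!: mult_strict_left_mono simp: lessThan_empty_iff)
  also have "\<dots> = (\<Sum>i<n. r ^ Suc i * \<alpha> (Suc i) - r ^ i * \<alpha> i)"
    by (simp add: algebra_simps)
  also have "\<dots> = r ^ n * \<alpha> n - r ^ 0 * \<alpha> 0"
    by (rule sum_lessThan_telescope)
  also have "\<dots> = r ^ n"
    using assms by simp
  finally show False
    using power_le by simp
qed

theorem theorem1:
  fixes n :: nat and a :: "nat \<Rightarrow> quat" and \<alpha> :: "nat \<Rightarrow> real" and q :: quat
  assumes "n \<ge> 1"
    and "\<forall>i. 1 \<le> i \<and> i \<le> n - 1 \<longrightarrow> \<alpha> i > 0"
    and "\<alpha> 0 = 0" and "\<alpha> n = 1"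
    and "qpoly_eval n a q = qzero"
  shows "qnorm q \<le> Max ((\<lambda>i. \<alpha> i / \<alpha> (Suc i) + qnorm (a i) / \<alpha> (Suc i)) ` {0..<n})"
proof (rule le_Max_if_power_le_weighted_sum)
  show "0 < \<alpha> (Suc i)" if "i < n" for i
    using that assms(2,4) by (cases "Suc i = n") auto
  show "0 \<le> qnorm (a i)" for i
    by (rule qnorm_nonneg)
  show "qnorm q ^ n \<le> (\<Sum>i<n. qnorm q ^ i * qnorm (a i))"
    using assms(5) by (rule qnorm_power_le_sum_if_qpoly_root)
qed (use assms in auto)

end
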